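(* Let $\mathcal H_\mathrm{S},\mathcal H_\mathrm{M},\mathcal H_\mathrm{R}$ be finite-dimensional Hilbert spaces, $\mathcal H_\mathrm{R}=\sum_r E_r|r\rangle\langle r|$ a reservoir Hamiltonian with orthonormal eigenbasis $\{|r\rangle\}$, $\beta>0$, $P_r=e^{-\beta E_r}/\sum_s e^{-\beta E_s}$, $\rho^\mathrm{i}_\mathrm{R}=\sum_rP_r|r\rangle\langle r|$. Let $\rho^\mathrm{i}_\mathrm{SM}$ be a density operator on $\mathcal H_\mathrm{S}\otimes\mathcal H_\mathrm{M}$, $U_\mathrm{SR}$ a unitary on $\mathcal H_\mathrm{S}\otimes\mathcal H_\mathrm{R}$, $U=U_\mathrm{SR}\otimes 1_\mathrm{M}$, $\rho^\mathrm{f}_\mathrm{SM}=\mathrm{Tr}_\mathrm{R}[U(\rho^\mathrm{i}_\mathrm{SM}\otimes\rho^\mathrm{i}_\mathrm{R})U^\dagger]$. Let $\{|a\rangle\}$ be an orthonormal eigenbasis of $\rho^\mathrm{i}_\mathrm{S}=\mathrm{Tr}_\mathrm{M}\rho^\mathrm{i}_\mathrm{SM}$, $\rho^\mathrm{f}_\mathrm{S}=\mathrm{Tr}_\mathrm{M}\rho^\mathrm{f}_\mathrm{SM}=\sum_{a'}\tilde P_{a'}|a'\rangle\langle a'|$ a spectral decomposition, and $\{|b\rangle\}$ an orthonormal eigenbasis of $\rho^\mathrm{i}_\mathrm{M}$. Set $P_{ab}=\langle a,b|\rho^\mathrm{i}_\mathrm{SM}|a,b\rangle$, $P_a=\sum_bP_{ab}$,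 $P_b=\sum_aP_{ab}$, $\tilde P_{a'b}=\langle a',b|\rho^\mathrm{f}_\mathrm{SM}|a',b\rangle$, and assume $P_{ab}>0$ for all $a,b$. For $\gamma=(a,b,r,a',r')$ and $\gamma_\mathrm{SR}=(a,r,a',r')$ let $P_\mathrm{F}[\gamma]=|\langle a',r'|U_\mathrm{SR}|a,r\rangle|^2P_{ab}P_r$ and $P_\mathrm{F}[\gamma_\mathrm{SR}]=\sum_bP_\mathrm{F}[\gamma]=|\langle a',r'|U_\mathrm{SR}|a,r\rangle|^2P_aP_r$. Define $\tilde\sigma_\mathrm{S|M}(\gamma)=-\ln(\tilde P_{a'b}/P_b)+\ln(P_{ab}/P_b)+\beta(E_{r'}-E_r)$, $\sigma_\mathrm{S}(\gamma_\mathrm{SR})=-\ln\tilde P_{a'}+\ln P_a+\beta(E_{r'}-E_r)$, and the stochastic dissipative information $\tilde\sigma_\mathrm{I}=\tilde\sigma_\mathrm{S|M}-\sigma_\mathrm{S}$. Then for every $\gamma_\mathrm{SR}$ with $P_\mathrm{F}[\gamma_\mathrm{SR}]>0$, $$\sum_b\frac{P_\mathrm{F}[\gamma]}{P_\mathrm{F}[\gamma_\mathrm{SR}]}\,e^{-\tilde\sigma_\mathrm{I}(\gamma)}=1,\qquad\text{and}\qquad\sum_{\gamma:\,P_\mathrm{F}[\gamma]>0}P_\mathrm{F}[\gamma]\,e^{-\tilde\sigma_\mathrm{I}(\gamma)}=1.$$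
   Context: The trajectories correspond to two-point projective measurements in local eigenbases of system and memory and the energy eigenbasis of the reservoir; the memory does not evolve. The first sum is the average conditioned on the system–reservoir trajectory $\gamma_\mathrm{SR}$, the second is the unconditional average. *)

theory Defs
  imports Complex_Main "HOL-Library.Extended_Real"
begin

text \<open>Finite-dimensional Hilbert spaces are modelled as functions from a finite
  index type (a fixed computational basis) to the complex numbers; operators as
  complex-valued kernels on that index type.\<close>

type_synonym 'a cvec = "'a \<Rightarrow> complex"
type_synonym 'a cop = "'a \<Rightarrow> 'a \<Rightarrow> complex"

definition cinner :: "('a::finite) cvec \<Rightarrow> 'a cvec \<Rightarrow> complex" where
  "cinner u v = (\<Sum>x\<in>UNIV. cnj (u x) * v x)"

definition apply_op :: "('a::finite) cop \<Rightarrow> 'a cvec \<Rightarrow> 'a cvec" where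
  "apply_op A v = (\<lambda>x. \<Sum>y\<in>UNIV. A x y * v y)"

definition op_mult :: "('a::finite) cop \<Rightarrow> 'a cop \<Rightarrow> 'a cop" where
  "op_mult A B = (\<lambda>x z. \<Sum>y\<in>UNIV. A x y * B y z)"

definition adj :: "'a cop \<Rightarrow> 'a cop" where
  "adj A = (\<lambda>x y. cnj (A y x))"

definition id_op :: "'a cop" where
  "id_op = (\<lambda>x y. if x = y then 1 else 0)"

definition ctrace :: "('a::finite) cop \<Rightarrow> complex" where
  "ctrace A = (\<Sum>x\<in>UNIV. A x x)"

definition ketbra :: "'a cvec \<Rightarrow> 'a cvec \<Rightarrow> 'a cop" where
  "ketbra u v = (\<lambda>x y. u x * cnj (v y))"

definition tensor_vec :: "'a cvec \<Rightarrow> 'b cvec \<Rightarrow> ('a \<times> 'b) cvec" where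
  "tensor_vec u v = (\<lambda>(x, y). u x * v y)"

definition tensor_op :: "'a cop \<Rightarrow> 'b cop \<Rightarrow> ('a \<times> 'b) cop" where
  "tensor_op A B = (\<lambda>(x, y) (x', y'). A x x' * B y y')"

definition ptrace2 :: "('a \<times> 'b::finite) cop \<Rightarrow> 'a cop" where
  "ptrace2 A = (\<lambda>x x'. \<Sum>y\<in>UNIV. A (x, y) (x', y))"

definition ptrace1 :: "('a::finite \<times> 'b) cop \<Rightarrow> 'b cop" where
  "ptrace1 A = (\<lambda>y y'. \<Sum>x\<in>UNIV. A (x, y) (x, y'))"

text \<open>An orthonormal basis of the space indexed by the finite type 'a is an
  orthonormal family of CARD('a) vectors, indexed by 'a itself.\<close>
definition orthonormal_basis :: "('a::finite \<Rightarrow> 'a cvec) \<Rightarrow> bool" where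
  "orthonormal_basis e \<longleftrightarrow> (\<forall>i j. cinner (e i) (e j) = (if i = j then 1 else 0))"

definition is_eigvec :: "('a::finite) cop \<Rightarrow> 'a cvec \<Rightarrow> bool" where
  "is_eigvec A v \<longleftrightarrow> (\<exists>c. apply_op A v = (\<lambda>x. c * v x))"

definition eigenbasis :: "('a::finite) cop \<Rightarrow> ('a \<Rightarrow> 'a cvec) \<Rightarrow> bool" where
  "eigenbasis A e \<longleftrightarrow> orthonormal_basis e \<and> (\<forall>i. is_eigvec A (e i))"

definition density_op :: "('a::finite) cop \<Rightarrow> bool" where
  "density_op \<rho> \<longleftrightarrow>
     (\<forall>v. Im (cinner v (apply_op \<rho> v)) = 0 \<and> 0 \<le> Re (cinner v (apply_op \<rho> v)))
     \<and> ctrace \<rho> = 1"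

definition unitary_op :: "('a::finite) cop \<Rightarrow> bool" where
  "unitary_op U \<longleftrightarrow> op_mult (adj U) U = id_op \<and> op_mult U (adj U) = id_op"

text \<open>Logarithm and exponential with the conventions ln 0 = -\<infinity>, exp(-\<infinity>) = 0,
  needed for stochastic entropies of trajectories with vanishing final probability.
  (The value at +\<infinity> is irrelevant for the theorem and set to 0.)\<close>
definition eln :: "real \<Rightarrow> ereal" where
  "eln x = (if 0 < x then ereal (ln x) else -\<infinity>)"

definition eexp :: "ereal \<Rightarrow> real" where
  "eexp t = (case t of ereal x \<Rightarrow> exp x | _ \<Rightarrow> 0)"

end

theory Submission
  imports Defs "HOL-Analysis.Cartesian_Space"
begin

(* Write A = |<a',r'|U_SR|a,r>|^2. Expanding the partial traces in the bases |a',b> and |r'>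
   writes each final population P~_a'b as a nonnegative combination of quadratic forms of
   rho_SM; summing over b and diagonalising rho_S in the basis |a> gives
   P~_a' = sum over (a, r, r') of A P_a P_r, the marginal of P_F[gamma_SR].  Hence P~_a' > 0
   whenever P_F[gamma_SR] > 0, and on such trajectories e^(-sigma_I) = P~_a'b P_a / (P_ab P~_a')
   while P_F[gamma] / P_F[gamma_SR] = P_ab / P_a, so the conditional average is
   sum_b P~_a'b / P~_a' = 1.  As P_ab > 0, P_F[gamma] > 0 exactly when P_F[gamma_SR] > 0, so the
   unconditional average is sum P_F[gamma_SR] = 1 by unitarity of U_SR. *)

definition diag_op :: "('i \<Rightarrow> 'a cvec) \<Rightarrow> ('i::finite \<Rightarrow> complex) \<Rightarrow> 'a cop" where
  "diag_op e c = (\<lambda>x y. \<Sum>i\<in>UNIV. c i * ketbra (e i) (e i) x y)"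

definition partial_cinner :: "('b::finite) cvec \<Rightarrow> ('a \<times> 'b) cvec \<Rightarrow> 'a cvec" where
  "partial_cinner e v = (\<lambda>x. \<Sum>y\<in>UNIV. cnj (e y) * v (x, y))"

(* V \<otimes> 1_M, with the memory factor placed between system and reservoir as in U *)
definition extend_op :: "('s \<times> 'r) cop \<Rightarrow> (('s \<times> 'm) \<times> 'r) cop" where
  "extend_op V = (\<lambda>((s, m), r) ((s', m'), r'). V (s, r) (s', r') * id_op m m')"

definition reduced_evolution ::
    "('s::finite \<times> 'r::finite) cop \<Rightarrow> 'r cop \<Rightarrow> ('s \<times> 'm::finite) cop \<Rightarrow> ('s \<times> 'm) cop"
  where "reduced_evolution V \<rho>R X =
    ptrace2 (op_mult (extend_op V) (op_mult (tensor_op X \<rho>R) (adj (extend_op V))))"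

lemma sum_UNIV_prod:
  "(\<Sum>z\<in>(UNIV :: ('a::finite \<times> 'b::finite) set). g z) = (\<Sum>x\<in>UNIV. \<Sum>y\<in>UNIV. g (x, y))"
  by (simp add: sum.cartesian_product)

lemma sum_swap_innermost4:
  "(\<Sum>j\<in>J. \<Sum>x\<in>A. \<Sum>y\<in>B. \<Sum>x'\<in>C. \<Sum>y'\<in>D. g j x y x' y')
   = (\<Sum>x\<in>A. \<Sum>y\<in>B. \<Sum>x'\<in>C. \<Sum>y'\<in>D. \<Sum>j\<in>J. g j x y x' y')"
  by (rule trans[OF sum.swap], rule sum.cong[OF refl], rule trans[OF sum.swap],
      rule sum.cong[OF refl], rule trans[OF sum.swap], rule sum.cong[OF refl], rule sum.swap)

lemma cnj_mult_self: "cnj z * z = complex_of_real ((cmod z)\<^sup>2)"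
  by (metis complex_norm_square mult.commute)

lemma orthonormal_basis_completeness:
  assumes "orthonormal_basis (e :: 'a::finite \<Rightarrow> 'a cvec)"
  shows "(\<Sum>i\<in>UNIV. e i x * cnj (e i y)) = (if x = y then 1 else 0)"
proof -
  (* the Gram identity says A ** B = 1 for square matrices, hence also B ** A = 1 *)
  define A :: "complex^'a^'a" where "A = (\<chi> i j. cnj (e i j))"
  define B :: "complex^'a^'a" where "B = (\<chi> j i. e i j)"
  have "A ** B = mat 1"
    using assms unfolding A_def B_def orthonormal_basis_def cinner_def
    by (simp add: matrix_matrix_mult_def mat_def vec_eq_iff)
  then have "B ** A = mat 1"
    using matrix_left_right_inverse by blast
  then have "(B ** A) $ x $ y = mat 1 $ x $ y"
    by simp
  then show ?thesis
    unfolding A_def B_def by (simp add: matrix_matrix_mult_def mat_def)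
qed

lemma cinner_commute: "cinner u v = cnj (cinner v (u :: 'a::finite cvec))"
  unfolding cinner_def by (simp add: mult.commute)

lemma cinner_orthonormal_basis:
  "orthonormal_basis e \<Longrightarrow> cinner (e i) (e j) = (if i = j then 1 else 0)"
  unfolding orthonormal_basis_def by blast

lemma parseval_orthonormal_basis:
  assumes "orthonormal_basis (e :: 'a::finite \<Rightarrow> 'a cvec)"
  shows "(\<Sum>i\<in>UNIV. cnj (cinner (e i) v) * cinner (e i) w) = cinner v w"
proof -
  have "(\<Sum>i\<in>UNIV. cnj (cinner (e i) v) * cinner (e i) w)
      = (\<Sum>i\<in>UNIV. \<Sum>x\<in>UNIV. \<Sum>y\<in>UNIV. cnj (v x) * w y * (e i x * cnj (e i y)))"
    unfolding cinner_def by (simp add: sum_distrib_left sum_distrib_right mult_ac)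
  also have "\<dots> = (\<Sum>x\<in>UNIV. \<Sum>y\<in>UNIV. cnj (v x) * w y * (\<Sum>i\<in>UNIV. e i x * cnj (e i y)))"
    by (rule trans[OF sum.swap], rule sum.cong[OF refl], subst sum_distrib_left, rule sum.swap)
  also have "\<dots> = cinner v w"
    unfolding orthonormal_basis_completeness[OF assms] cinner_def
    by (simp add: if_distrib cong: if_cong)
  finally show ?thesis .
qed

lemma ctrace_orthonormal_basis:
  assumes "orthonormal_basis (e :: 'a::finite \<Rightarrow> 'a cvec)"
  shows "(\<Sum>i\<in>UNIV. cinner (e i) (apply_op A (e i))) = ctrace A"
proof -
  have "(\<Sum>i\<in>UNIV. cinner (e i) (apply_op A (e i)))
      = (\<Sum>i\<in>UNIV. \<Sum>x\<in>UNIV. \<Sum>y\<in>UNIV. A x y * (e i y * cnj (e i x)))"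
    unfolding cinner_def apply_op_def by (simp add: sum_distrib_left mult_ac)
  also have "\<dots> = (\<Sum>x\<in>UNIV. \<Sum>y\<in>UNIV. A x y * (\<Sum>i\<in>UNIV. e i y * cnj (e i x)))"
    by (rule trans[OF sum.swap], rule sum.cong[OF refl], subst sum_distrib_left, rule sum.swap)
  also have "\<dots> = ctrace A"
    unfolding orthonormal_basis_completeness[OF assms] ctrace_def
    by (simp add: if_distrib cong: if_cong)
  finally show ?thesis .
qed

lemma cinner_tensor_vec:
  "cinner (tensor_vec u v) (tensor_vec u' v') = cinner u u' * cinner v (v' :: 'b::finite cvec)"
  for u u' :: "'a::finite cvec"
  unfolding cinner_def tensor_vec_def sum_UNIV_prod sum_product
  by (simp add: ac_simps)

lemma orthonormal_basis_tensor_vec: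
  assumes "orthonormal_basis (e :: 'a::finite \<Rightarrow> 'a cvec)" "orthonormal_basis (f :: 'b::finite \<Rightarrow> 'b cvec)"
  shows "orthonormal_basis (\<lambda>(i, j). tensor_vec (e i) (f j))"
  using assms unfolding orthonormal_basis_def by (simp add: cinner_tensor_vec split_paired_all)

lemma cinner_adj: "cinner v (apply_op (adj A) w) = cinner (apply_op A v) (w :: 'a::finite cvec)"
proof -
  have "cinner v (apply_op (adj A) w) = (\<Sum>x\<in>UNIV. \<Sum>y\<in>UNIV. cnj (v x) * cnj (A y x) * w y)"
    unfolding cinner_def apply_op_def adj_def by (simp add: sum_distrib_left mult.assoc)
  also have "\<dots> = (\<Sum>y\<in>UNIV. \<Sum>x\<in>UNIV. cnj (v x) * cnj (A y x) * w y)"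
    by (rule sum.swap)
  also have "\<dots> = cinner (apply_op A v) w"
    unfolding cinner_def apply_op_def by (simp add: sum_distrib_left sum_distrib_right mult_ac)
  finally show ?thesis .
qed

lemma apply_op_op_mult: "apply_op (op_mult A B) v = apply_op A (apply_op B (v :: 'a::finite cvec))"
proof
  fix x
  have "apply_op (op_mult A B) v x = (\<Sum>y\<in>UNIV. \<Sum>z\<in>UNIV. A x z * B z y * v y)"
    unfolding op_mult_def apply_op_def by (simp add: sum_distrib_right)
  also have "\<dots> = (\<Sum>z\<in>UNIV. \<Sum>y\<in>UNIV. A x z * B z y * v y)"
    by (rule sum.swap)
  also have "\<dots> = apply_op A (apply_op B v) x"
    unfolding apply_op_def by (simp add: sum_distrib_left mult.assoc)
  finally show "apply_op (op_mult A B) v x = apply_op A (apply_op B v) x" .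
qed

lemma apply_op_id_op: "apply_op id_op v = (v :: 'a::finite cvec)"
proof
  fix x
  have "apply_op id_op v x = (\<Sum>y\<in>UNIV. if x = y then v y else 0)"
    unfolding apply_op_def id_op_def by (rule sum.cong) auto
  then show "apply_op id_op v x = v x"
    by simp
qed

lemma adj_adj [simp]: "adj (adj A) = A"
  by (simp add: adj_def)

lemma cinner_unitary_op:
  assumes "unitary_op U"
  shows "cinner (apply_op U v) (apply_op U w) = cinner v (w :: 'a::finite cvec)"
proof -
  have "cinner (apply_op U v) (apply_op U w) = cinner v (apply_op (op_mult (adj U) U) w)"
    by (simp add: apply_op_op_mult cinner_adj)
  then show ?thesis
    using assms unfolding unitary_op_def by (simp add: apply_op_id_op)
qed

lemma cinner_conj_op:
  "cinner w (apply_op (op_mult U (op_mult B (adj U))) w)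
   = cinner (apply_op (adj U) w) (apply_op B (apply_op (adj U) (w :: 'a::finite cvec)))"
  by (simp add: apply_op_op_mult cinner_adj[symmetric])

lemma cinner_ptrace2:
  assumes "orthonormal_basis (f :: 'b::finite \<Rightarrow> 'b cvec)"
  shows "cinner u (apply_op (ptrace2 A) u)
       = (\<Sum>j\<in>UNIV. cinner (tensor_vec u (f j)) (apply_op A (tensor_vec (u :: 'a::finite cvec) (f j))))"
proof -
  have "(\<Sum>j\<in>UNIV. cinner (tensor_vec u (f j)) (apply_op A (tensor_vec u (f j))))
      = (\<Sum>j\<in>UNIV. \<Sum>x\<in>UNIV. \<Sum>y\<in>UNIV. \<Sum>x'\<in>UNIV. \<Sum>y'\<in>UNIV.
           A (x, y) (x', y') * (cnj (u x) * u x') * (f j y' * cnj (f j y)))"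
    unfolding cinner_def apply_op_def tensor_vec_def sum_UNIV_prod
    by (simp add: sum_distrib_left mult_ac)
  also have "\<dots> = (\<Sum>x\<in>UNIV. \<Sum>y\<in>UNIV. \<Sum>x'\<in>UNIV. \<Sum>y'\<in>UNIV.
           A (x, y) (x', y') * (cnj (u x) * u x') * (\<Sum>j\<in>UNIV. f j y' * cnj (f j y)))"
    by (rule trans[OF sum_swap_innermost4]) (simp only: sum_distrib_left)
  also have "\<dots> = (\<Sum>x\<in>UNIV. \<Sum>y\<in>UNIV. \<Sum>x'\<in>UNIV. A (x, y) (x', y) * (cnj (u x) * u x'))"
    unfolding orthonormal_basis_completeness[OF assms] by (simp add: if_distrib cong: if_cong)
  also have "\<dots> = (\<Sum>x\<in>UNIV. \<Sum>x'\<in>UNIV. \<Sum>y\<in>UNIV. A (x, y) (x', y) * (cnj (u x) * u x'))"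
    by (rule sum.cong[OF refl], rule sum.swap)
  also have "\<dots> = cinner u (apply_op (ptrace2 A) u)"
    unfolding cinner_def apply_op_def ptrace2_def
    by (simp add: sum_distrib_left sum_distrib_right mult_ac)
  finally show ?thesis ..
qed

lemma cinner_diag_op:
  "cinner v (apply_op (diag_op e c) v) = (\<Sum>i\<in>UNIV. c i * cnj (cinner (e i) v) * cinner (e i) (v :: 'a::finite cvec))"
proof -
  have "(\<Sum>i\<in>UNIV. c i * cnj (cinner (e i) v) * cinner (e i) v)
      = (\<Sum>i\<in>UNIV. \<Sum>x\<in>UNIV. \<Sum>y\<in>UNIV. cnj (v x) * (c i * e i x * cnj (e i y)) * v y)"
    unfolding cinner_def by (simp add: sum_distrib_left sum_distrib_right mult_ac)
  also have "\<dots> = (\<Sum>x\<in>UNIV. \<Sum>y\<in>UNIV. \<Sum>i\<in>UNIV. cnj (v x) * (c i * e i x * cnj (e i y)) * v y)"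
    by (rule trans[OF sum.swap], rule sum.cong[OF refl], rule sum.swap)
  also have "\<dots> = cinner v (apply_op (diag_op e c) v)"
    unfolding cinner_def apply_op_def diag_op_def ketbra_def
    by (simp add: sum_distrib_left sum_distrib_right mult_ac)
  finally show ?thesis ..
qed

lemma cinner_diag_op_basis:
  assumes "orthonormal_basis e"
  shows "cinner (e j) (apply_op (diag_op e c) (e j)) = c (j :: 'a::finite)"
proof -
  have "cinner (e j) (apply_op (diag_op e c) (e j)) = (\<Sum>i\<in>UNIV. if i = j then c i else 0)"
    unfolding cinner_diag_op cinner_orthonormal_basis[OF assms] by (rule sum.cong) auto
  then show ?thesis
    by simp
qed

lemma eigenbasis_diag_op:
  assumes "eigenbasis A e"
  shows "A = diag_op e (\<lambda>i. cinner (e i) (apply_op A (e i)))"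
proof (intro ext)
  fix x y
  have onb: "orthonormal_basis e"
    using assms unfolding eigenbasis_def by simp
  have eigen: "apply_op A (e i) = (\<lambda>x. cinner (e i) (apply_op A (e i)) * e i x)" for i
  proof -
    obtain c where c: "apply_op A (e i) = (\<lambda>x. c * e i x)"
      using assms unfolding eigenbasis_def is_eigvec_def by blast
    have "cinner (e i) (apply_op A (e i)) = c * cinner (e i) (e i)"
      unfolding c cinner_def by (simp add: sum_distrib_left mult_ac)
    then show ?thesis
      using c cinner_orthonormal_basis[OF onb] by simp
  qed
  have "A x y = (\<Sum>z\<in>UNIV. A x z * (\<Sum>i\<in>UNIV. e i z * cnj (e i y)))"
    unfolding orthonormal_basis_completeness[OF onb] by (simp add: if_distrib cong: if_cong)
  also have "\<dots> = (\<Sum>i\<in>UNIV. \<Sum>z\<in>UNIV. A x z * e i z * cnj (e i y))"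
    unfolding sum_distrib_left by (subst sum.swap) (simp add: mult_ac)
  also have "\<dots> = (\<Sum>i\<in>UNIV. apply_op A (e i) x * cnj (e i y))"
    unfolding apply_op_def by (simp add: sum_distrib_right)
  also have "\<dots> = diag_op e (\<lambda>i. cinner (e i) (apply_op A (e i))) x y"
    unfolding diag_op_def ketbra_def by (subst eigen) (simp add: mult_ac)
  finally show "A x y = diag_op e (\<lambda>i. cinner (e i) (apply_op A (e i))) x y" .
qed

lemma Re_cinner_eigenbasis:
  assumes "eigenbasis A e"
  shows "Re (cinner v (apply_op A v))
       = (\<Sum>i\<in>UNIV. Re (cinner (e i) (apply_op A (e i))) * (cmod (cinner (e i) v))\<^sup>2)"
proof -
  have "cinner v (apply_op A v)
      = (\<Sum>i\<in>UNIV. cinner (e i) (apply_op A (e i)) * complex_of_real ((cmod (cinner (e i) v))\<^sup>2))"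
    by (subst eigenbasis_diag_op[OF assms], subst cinner_diag_op) (simp only: mult.assoc cnj_mult_self)
  then show ?thesis
    by simp
qed

lemma sum_cmod_square_cinner_unitary:
  assumes "unitary_op U" "orthonormal_basis e"
  shows "(\<Sum>i\<in>UNIV. (cmod (cinner (e i) (apply_op U v)))\<^sup>2) = Re (cinner v (v :: 'a::finite cvec))"
proof -
  have "complex_of_real (\<Sum>i\<in>UNIV. (cmod (cinner (e i) (apply_op U v)))\<^sup>2)
      = (\<Sum>i\<in>UNIV. cnj (cinner (e i) (apply_op U v)) * cinner (e i) (apply_op U v))"
    by (simp only: of_real_sum cnj_mult_self)
  also have "\<dots> = cinner v v"
    unfolding parseval_orthonormal_basis[OF assms(2)] cinner_unitary_op[OF assms(1)] ..
  finally show ?thesis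
    by (metis Re_complex_of_real)
qed

lemma sum_transition_probabilities:
  assumes "unitary_op V" "orthonormal_basis f" "orthonormal_basis g"
    and "orthonormal_basis e" "orthonormal_basis h"
  shows "(\<Sum>i\<in>UNIV. \<Sum>j\<in>UNIV. (cmod (cinner (tensor_vec (f i) (g j)) (apply_op V (tensor_vec (e k) (h l)))))\<^sup>2) = 1"
  using sum_cmod_square_cinner_unitary[OF assms(1) orthonormal_basis_tensor_vec[OF assms(2,3)]]
  by (simp add: sum_UNIV_prod cinner_tensor_vec cinner_orthonormal_basis[OF assms(4)]
      cinner_orthonormal_basis[OF assms(5)])

lemma sum_populations_density_op:
  assumes "density_op \<rho>" "orthonormal_basis e"
  shows "(\<Sum>i\<in>UNIV. Re (cinner (e i) (apply_op \<rho> (e i)))) = 1"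
  using assms unfolding density_op_def by (simp flip: Re_sum add: ctrace_orthonormal_basis)

lemma cinner_partial_cinner: "cinner u (partial_cinner g v) = cinner (tensor_vec u g) v"
  unfolding cinner_def partial_cinner_def tensor_vec_def sum_UNIV_prod
  by (simp add: sum_distrib_left mult_ac)

lemma cinner_tensor_op_diag_op:
  "cinner v (apply_op (tensor_op X (diag_op e c)) v)
   = (\<Sum>r\<in>UNIV. c r * cinner (partial_cinner (e r) v) (apply_op X (partial_cinner (e r) v)))"
  for v :: "('a::finite \<times> 'b::finite) cvec"
proof -
  have "(\<Sum>r\<in>UNIV. c r * cinner (partial_cinner (e r) v) (apply_op X (partial_cinner (e r) v)))
      = (\<Sum>r\<in>UNIV. \<Sum>x\<in>UNIV. \<Sum>x'\<in>UNIV. \<Sum>y'\<in>UNIV. \<Sum>y\<in>UNIV.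
           cnj (v (x, y)) * X x x' * v (x', y') * (c r * e r y * cnj (e r y')))"
    unfolding cinner_def apply_op_def partial_cinner_def
    by (simp add: sum_distrib_left sum_distrib_right mult_ac)
  also have "\<dots> = (\<Sum>x\<in>UNIV. \<Sum>x'\<in>UNIV. \<Sum>y'\<in>UNIV. \<Sum>y\<in>UNIV.
           cnj (v (x, y)) * X x x' * v (x', y') * (\<Sum>r\<in>UNIV. c r * e r y * cnj (e r y')))"
    by (rule trans[OF sum_swap_innermost4]) (simp only: sum_distrib_left)
  also have "\<dots> = (\<Sum>x\<in>UNIV. \<Sum>x'\<in>UNIV. \<Sum>y\<in>UNIV. \<Sum>y'\<in>UNIV.
           cnj (v (x, y)) * X x x' * v (x', y') * (\<Sum>r\<in>UNIV. c r * e r y * cnj (e r y')))"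
    by (rule sum.cong[OF refl], rule sum.cong[OF refl], rule sum.swap)
  also have "\<dots> = (\<Sum>x\<in>UNIV. \<Sum>y\<in>UNIV. \<Sum>x'\<in>UNIV. \<Sum>y'\<in>UNIV.
           cnj (v (x, y)) * X x x' * v (x', y') * (\<Sum>r\<in>UNIV. c r * e r y * cnj (e r y')))"
    by (rule sum.cong[OF refl], rule sum.swap)
  also have "\<dots> = cinner v (apply_op (tensor_op X (diag_op e c)) v)"
    unfolding cinner_def apply_op_def tensor_op_def diag_op_def ketbra_def sum_UNIV_prod
    by (simp add: sum_distrib_left mult_ac)
  finally show ?thesis ..
qed

lemma adj_extend_op: "adj (extend_op V) = extend_op (adj V)"
  by (auto simp: adj_def extend_op_def id_op_def fun_eq_iff)

lemma apply_op_extend_op: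
  "apply_op (extend_op W) w ((s, m), r) = apply_op W (\<lambda>(s', r'). w ((s', m), r')) (s, r)"
  for W :: "('s::finite \<times> 'r::finite) cop" and w :: "(('s \<times> 'm::finite) \<times> 'r) cvec"
proof -
  have "apply_op (extend_op W) w ((s, m), r)
      = (\<Sum>s'\<in>UNIV. \<Sum>m'\<in>UNIV. if m' = m then \<Sum>r'\<in>UNIV. W (s, r) (s', r') * w ((s', m'), r') else 0)"
    unfolding apply_op_def extend_op_def id_op_def sum_UNIV_prod
    by (intro sum.cong refl) auto
  also have "\<dots> = apply_op W (\<lambda>(s', r'). w ((s', m), r')) (s, r)"
    unfolding apply_op_def sum_UNIV_prod by simp
  finally show ?thesis .
qed

lemma apply_op_scale: "apply_op A (\<lambda>x. c * v x) = (\<lambda>x. c * apply_op A v x)"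
  unfolding apply_op_def by (simp add: sum_distrib_left mult_ac)

lemma partial_cinner_extend_op:
  "partial_cinner g (apply_op (extend_op W) (tensor_vec (tensor_vec p q) h))
   = tensor_vec (partial_cinner g (apply_op W (tensor_vec p h))) (q :: 'm::finite cvec)"
  for W :: "('s::finite \<times> 'r::finite) cop"
proof
  fix z :: "'s \<times> 'm"
  obtain s m where z: "z = (s, m)"
    by fastforce
  have "(\<lambda>(s', r'). tensor_vec (tensor_vec p q) h ((s', m), r')) = (\<lambda>z. q m * tensor_vec p h z)"
    by (auto simp: tensor_vec_def)
  then show "partial_cinner g (apply_op (extend_op W) (tensor_vec (tensor_vec p q) h)) z
      = tensor_vec (partial_cinner g (apply_op W (tensor_vec p h))) q z"
    unfolding z partial_cinner_def
    by (simp add: apply_op_extend_op apply_op_scale tensor_vec_def sum_distrib_left mult_ac)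
qed

(* Kraus form of the reduced evolution: \<phi> r' r = K\<^sup>\<dagger> u for K = <f r'| V |e r> *)
lemma cinner_reduced_evolution_tensor_vec:
  fixes X :: "('s::finite \<times> 'm::finite) cop" and V :: "('s \<times> 'r::finite) cop"
    and e f :: "'r \<Rightarrow> 'r cvec" and u :: "'s cvec" and q :: "'m cvec"
  defines "\<phi> \<equiv> \<lambda>r' r. partial_cinner (e r) (apply_op (adj V) (tensor_vec u (f r')))"
  assumes onb_f: "orthonormal_basis f"
  shows "cinner (tensor_vec u q) (apply_op (reduced_evolution V (diag_op e c) X) (tensor_vec u q))
       = (\<Sum>r'\<in>UNIV. \<Sum>r\<in>UNIV. c r * cinner (tensor_vec (\<phi> r' r) q) (apply_op X (tensor_vec (\<phi> r' r) q)))"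
  unfolding reduced_evolution_def cinner_ptrace2[OF onb_f] cinner_conj_op
  unfolding \<phi>_def adj_extend_op cinner_tensor_op_diag_op partial_cinner_extend_op ..

lemma Re_cinner_reduced_evolution_nonneg:
  assumes "orthonormal_basis e" "\<And>r. 0 \<le> p r" "\<And>v. 0 \<le> Re (cinner v (apply_op X v))"
  shows "0 \<le> Re (cinner (tensor_vec u q)
                  (apply_op (reduced_evolution V (diag_op e (\<lambda>r. complex_of_real (p r))) X) (tensor_vec u q)))"
  unfolding cinner_reduced_evolution_tensor_vec[OF assms(1)]
  by (simp add: assms(2,3) sum_nonneg)

lemma sum_Re_cinner_reduced_evolution:
  fixes X :: "('s::finite \<times> 'm::finite) cop" and V :: "('s \<times> 'r::finite) cop"
  assumes "orthonormal_basis e" "orthonormal_basis eb" "eigenbasis (ptrace2 X) ea"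
  shows "(\<Sum>b\<in>UNIV. Re (cinner (tensor_vec u (eb b))
            (apply_op (reduced_evolution V (diag_op e (\<lambda>r. complex_of_real (p r))) X) (tensor_vec u (eb b)))))
       = (\<Sum>r'\<in>UNIV. \<Sum>r\<in>UNIV. \<Sum>a\<in>UNIV.
            (cmod (cinner (tensor_vec u (e r')) (apply_op V (tensor_vec (ea a) (e r)))))\<^sup>2
            * Re (cinner (ea a) (apply_op (ptrace2 X) (ea a))) * p r)"
proof -
  define \<phi> where "\<phi> r' r = partial_cinner (e r) (apply_op (adj V) (tensor_vec u (e r')))" for r' r
  have amplitude: "cmod (cinner (ea a) (\<phi> r' r))
      = cmod (cinner (tensor_vec u (e r')) (apply_op V (tensor_vec (ea a) (e r))))" for a r r'
    unfolding \<phi>_def cinner_partial_cinner cinner_adj by (subst cinner_commute) simp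
  have "(\<Sum>b\<in>UNIV. Re (cinner (tensor_vec u (eb b))
            (apply_op (reduced_evolution V (diag_op e (\<lambda>r. complex_of_real (p r))) X) (tensor_vec u (eb b)))))
      = (\<Sum>b\<in>UNIV. \<Sum>r'\<in>UNIV. \<Sum>r\<in>UNIV.
           p r * Re (cinner (tensor_vec (\<phi> r' r) (eb b)) (apply_op X (tensor_vec (\<phi> r' r) (eb b)))))"
    unfolding cinner_reduced_evolution_tensor_vec[OF assms(1)] \<phi>_def by simp
  also have "\<dots> = (\<Sum>r'\<in>UNIV. \<Sum>r\<in>UNIV. \<Sum>b\<in>UNIV.
           p r * Re (cinner (tensor_vec (\<phi> r' r) (eb b)) (apply_op X (tensor_vec (\<phi> r' r) (eb b)))))"
    by (rule trans[OF sum.swap], rule sum.cong[OF refl], rule sum.swap)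
  also have "\<dots> = (\<Sum>r'\<in>UNIV. \<Sum>r\<in>UNIV. p r * Re (cinner (\<phi> r' r) (apply_op (ptrace2 X) (\<phi> r' r))))"
    unfolding cinner_ptrace2[OF assms(2)] by (simp add: sum_distrib_left)
  also have "\<dots> = (\<Sum>r'\<in>UNIV. \<Sum>r\<in>UNIV. \<Sum>a\<in>UNIV.
           (cmod (cinner (tensor_vec u (e r')) (apply_op V (tensor_vec (ea a) (e r)))))\<^sup>2
           * Re (cinner (ea a) (apply_op (ptrace2 X) (ea a))) * p r)"
  proof -
    (* instantiated: as a rewrite rule it would loop on its own right-hand side *)
    have "Re (cinner (\<phi> r' r) (apply_op (ptrace2 X) (\<phi> r' r)))
        = (\<Sum>a\<in>UNIV. Re (cinner (ea a) (apply_op (ptrace2 X) (ea a))) * (cmod (cinner (ea a) (\<phi> r' r)))\<^sup>2)"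
      for r' r
      by (rule Re_cinner_eigenbasis[OF assms(3)])
    then show ?thesis
      unfolding amplitude by (simp add: sum_distrib_left mult_ac)
  qed
  finally show ?thesis .
qed

lemma final_populations:
  fixes X :: "('s::finite \<times> 'm::finite) cop" and V :: "('s \<times> 'r::finite) cop"
    and e :: "'r \<Rightarrow> 'r cvec" and p :: "'r \<Rightarrow> real"
    and ea ea' :: "'s \<Rightarrow> 's cvec" and eb :: "'m \<Rightarrow> 'm cvec" and Pt :: "'s \<Rightarrow> real"
    and \<rho>f Pf
  defines "\<rho>f \<equiv> reduced_evolution V (diag_op e (\<lambda>r. complex_of_real (p r))) X"
    and "Pf \<equiv> \<lambda>a' b. Re (cinner (tensor_vec (ea' a') (eb b)) (apply_op \<rho>f (tensor_vec (ea' a') (eb b))))"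
  assumes onb_e: "orthonormal_basis e" and p_nonneg: "\<And>r. 0 \<le> p r"
    and density: "density_op X" and eigen: "eigenbasis (ptrace2 X) ea"
    and onb_eb: "orthonormal_basis eb" and onb_ea': "orthonormal_basis ea'"
    and diagonal: "ptrace2 \<rho>f = diag_op ea' (\<lambda>a'. complex_of_real (Pt a'))"
  shows "0 \<le> Pf a' b"
    and "(\<Sum>b\<in>UNIV. Pf a' b) = Pt a'"
    and "Pt a' = (\<Sum>r'\<in>UNIV. \<Sum>r\<in>UNIV. \<Sum>a\<in>UNIV.
           (cmod (cinner (tensor_vec (ea' a') (e r')) (apply_op V (tensor_vec (ea a) (e r)))))\<^sup>2
           * (\<Sum>b\<in>UNIV. Re (cinner (tensor_vec (ea a) (eb b)) (apply_op X (tensor_vec (ea a) (eb b)))))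
           * p r)" (is "_ = ?populations")
proof -
  show "0 \<le> Pf a' b"
    using onb_e p_nonneg density unfolding Pf_def \<rho>f_def density_op_def
    by (intro Re_cinner_reduced_evolution_nonneg) auto
  have "(\<Sum>b\<in>UNIV. Pf a' b) = Re (cinner (ea' a') (apply_op (ptrace2 \<rho>f) (ea' a')))"
    unfolding Pf_def cinner_ptrace2[OF onb_eb] by simp
  also have "\<dots> = Pt a'"
    unfolding diagonal cinner_diag_op_basis[OF onb_ea'] by simp
  finally show Pt_sum: "(\<Sum>b\<in>UNIV. Pf a' b) = Pt a'" .
  have "Re (cinner (ea a) (apply_op (ptrace2 X) (ea a)))
      = (\<Sum>b\<in>UNIV. Re (cinner (tensor_vec (ea a) (eb b)) (apply_op X (tensor_vec (ea a) (eb b)))))" for a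
    unfolding cinner_ptrace2[OF onb_eb] by simp
  then show "Pt a' = ?populations"
    using sum_Re_cinner_reduced_evolution[OF onb_e onb_eb eigen]
    unfolding Pt_sum[symmetric] Pf_def \<rho>f_def by simp
qed

lemma eexp_neg_log_ratio_difference:
  fixes x p q s t d :: real
  assumes "0 \<le> x" "0 < p" "0 < q" "0 < s" "0 < t"
  shows "eexp (- ((- eln (x / q) + eln (p / q) + ereal d) - (- eln t + eln s + ereal d)))
       = x * s / (p * t)"
proof (cases "x = 0")
  case True
  then show ?thesis
    using assms by (simp add: eln_def eexp_def)
next
  case False
  then have "0 < x"
    using assms(1) by simp
  then have "eexp (- ((- eln (x / q) + eln (p / q) + ereal d) - (- eln t + eln s + ereal d)))
      = exp (ln x + ln s - ln p - ln t)"
    using assms by (simp add: eln_def eexp_def ln_div)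
  also have "\<dots> = x * s / (p * t)"
    using \<open>0 < x\<close> assms by (simp add: exp_add exp_diff)
  finally show ?thesis .
qed

lemma conditional_average_eq_one:
  fixes P Q q :: "'b::finite \<Rightarrow> real"
  assumes "\<And>b. 0 < P b" "\<And>b. 0 < q b" "\<And>b. 0 \<le> Q b" "0 < (\<Sum>b\<in>UNIV. Q b)" "0 < w"
  shows "(\<Sum>b\<in>UNIV. P b * w / (\<Sum>b\<in>UNIV. P b * w)
           * eexp (- ((- eln (Q b / q b) + eln (P b / q b) + ereal d)
                      - (- eln (\<Sum>b\<in>UNIV. Q b) + eln (\<Sum>b\<in>UNIV. P b) + ereal d)))) = 1"
proof -
  have "0 < (\<Sum>b\<in>UNIV. P b)"
    using assms(1) by (simp add: sum_pos)
  then have "eexp (- ((- eln (Q b / q b) + eln (P b / q b) + ereal d)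
                      - (- eln (\<Sum>b\<in>UNIV. Q b) + eln (\<Sum>b\<in>UNIV. P b) + ereal d)))
      = Q b * (\<Sum>b\<in>UNIV. P b) / (P b * (\<Sum>b\<in>UNIV. Q b))" for b
    using assms by (intro eexp_neg_log_ratio_difference) auto
  then have "P b * w / (\<Sum>b\<in>UNIV. P b * w)
           * eexp (- ((- eln (Q b / q b) + eln (P b / q b) + ereal d)
                      - (- eln (\<Sum>b\<in>UNIV. Q b) + eln (\<Sum>b\<in>UNIV. P b) + ereal d)))
      = Q b / (\<Sum>b\<in>UNIV. Q b)" for b
    using assms(1)[of b] assms(5) \<open>0 < (\<Sum>b\<in>UNIV. P b)\<close> by (simp add: sum_distrib_right[symmetric])
  then show ?thesis
    using assms(4) by (simp add: sum_divide_distrib[symmetric])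
qed

lemma sum_positive_weights_conditional:
  fixes F h :: "'a::finite \<times> 'b::finite \<times> 'c::finite \<Rightarrow> real"
  assumes nonneg: "\<And>\<gamma>. 0 \<le> F \<gamma>"
    and pos: "\<And>a b b' c. 0 < F (a, b, c) \<Longrightarrow> 0 < F (a, b', c)"
    and conditional: "\<And>a c. 0 < (\<Sum>b\<in>UNIV. F (a, b, c)) \<Longrightarrow>
                        (\<Sum>b\<in>UNIV. F (a, b, c) / (\<Sum>b\<in>UNIV. F (a, b, c)) * h (a, b, c)) = 1"
  shows "(\<Sum>\<gamma>\<in>{\<gamma>. 0 < F \<gamma>}. F \<gamma> * h \<gamma>) = (\<Sum>a\<in>UNIV. \<Sum>c\<in>UNIV. \<Sum>b\<in>UNIV. F (a, b, c))"
proof -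
  have inner: "(\<Sum>b\<in>UNIV. if 0 < F (a, b, c) then F (a, b, c) * h (a, b, c) else 0)
             = (\<Sum>b\<in>UNIV. F (a, b, c))" for a c
  proof (cases "0 < (\<Sum>b\<in>UNIV. F (a, b, c))")
    case True
    then obtain b0 where "0 < F (a, b0, c)"
      by (metis not_le sum_nonpos)
    then have "(\<Sum>b\<in>UNIV. if 0 < F (a, b, c) then F (a, b, c) * h (a, b, c) else 0)
             = (\<Sum>b\<in>UNIV. F (a, b, c)) * (\<Sum>b\<in>UNIV. F (a, b, c) / (\<Sum>b\<in>UNIV. F (a, b, c)) * h (a, b, c))"
      using True pos by (simp add: sum_distrib_left)
    then show ?thesis
      using conditional[OF True] by simp
  next
    case False
    then have "(\<Sum>b\<in>UNIV. F (a, b, c)) = 0"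
      using nonneg by (meson antisym not_less sum_nonneg)
    then have "F (a, b, c) = 0" for b
      by (simp add: sum_nonneg_eq_0_iff nonneg)
    then show ?thesis
      by simp
  qed
  have "(\<Sum>\<gamma>\<in>{\<gamma>. 0 < F \<gamma>}. F \<gamma> * h \<gamma>) = (\<Sum>\<gamma>\<in>UNIV. if 0 < F \<gamma> then F \<gamma> * h \<gamma> else 0)"
    using sum.inter_filter[of UNIV "\<lambda>\<gamma>. F \<gamma> * h \<gamma>" "\<lambda>\<gamma>. 0 < F \<gamma>"] by simp
  also have "\<dots> = (\<Sum>a\<in>UNIV. \<Sum>c\<in>UNIV. \<Sum>b\<in>UNIV. if 0 < F (a, b, c) then F (a, b, c) * h (a, b, c) else 0)"
    unfolding sum_UNIV_prod by (rule sum.cong[OF refl], rule sum.swap)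
  also have "\<dots> = (\<Sum>a\<in>UNIV. \<Sum>c\<in>UNIV. \<Sum>b\<in>UNIV. F (a, b, c))"
    unfolding inner ..
  finally show ?thesis .
qed

theorem theorem6:
  fixes \<rho>SM :: "('s::finite \<times> 'm::finite) cop"
    and USR :: "('s \<times> 'r::finite) cop"
    and E :: "'r \<Rightarrow> real" and er :: "'r \<Rightarrow> 'r cvec"
    and \<beta> :: real
    and ea :: "'s \<Rightarrow> 's cvec" and ea' :: "'s \<Rightarrow> 's cvec" and Pt :: "'s \<Rightarrow> real"
    and eb :: "'m \<Rightarrow> 'm cvec"
    and Pr and \<rho>R and U and \<rho>SMf and \<rho>Si and \<rho>Sf and \<rho>Mi and Pab and Pa and Pb
    and Ptab and PF and PFSR and \<sigma>SM and \<sigma>S and \<sigma>I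
  defines "Pr \<equiv> \<lambda>r. exp (- \<beta> * E r) / (\<Sum>s\<in>UNIV. exp (- \<beta> * E s))"
    and "\<rho>R \<equiv> (\<lambda>x y. \<Sum>r\<in>UNIV. complex_of_real (Pr r) * ketbra (er r) (er r) x y)"
    and "U \<equiv> (\<lambda>((s, m), r) ((s', m'), r'). USR (s, r) (s', r') * id_op m m')"
    and "\<rho>SMf \<equiv> ptrace2 (op_mult U (op_mult (tensor_op \<rho>SM \<rho>R) (adj U)))"
    and "\<rho>Si \<equiv> ptrace2 \<rho>SM"
    and "\<rho>Sf \<equiv> ptrace2 \<rho>SMf"
    and "\<rho>Mi \<equiv> ptrace1 \<rho>SM"
    and "Pab \<equiv> \<lambda>a b. Re (cinner (tensor_vec (ea a) (eb b))
                            (apply_op \<rho>SM (tensor_vec (ea a) (eb b))))"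
    and "Pa \<equiv> \<lambda>a. \<Sum>b\<in>UNIV. Pab a b"
    and "Pb \<equiv> \<lambda>b. \<Sum>a\<in>UNIV. Pab a b"
    and "Ptab \<equiv> \<lambda>a' b. Re (cinner (tensor_vec (ea' a') (eb b))
                            (apply_op \<rho>SMf (tensor_vec (ea' a') (eb b))))"
    and "PF \<equiv> \<lambda>(a, b, r, a', r').
            (cmod (cinner (tensor_vec (ea' a') (er r')) (apply_op USR (tensor_vec (ea a) (er r)))))\<^sup>2
            * Pab a b * Pr r"
    and "PFSR \<equiv> \<lambda>(a, r, a', r'). \<Sum>b\<in>UNIV. PF (a, b, r, a', r')"
    and "\<sigma>SM \<equiv> \<lambda>(a, b, r, a', r'). - eln (Ptab a' b / Pb b) + eln (Pab a b / Pb b)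
                                  + ereal (\<beta> * (E r' - E r))"
    and "\<sigma>S \<equiv> \<lambda>(a, r, a', r'). - eln (Pt a') + eln (Pa a) + ereal (\<beta> * (E r' - E r))"
    and "\<sigma>I \<equiv> \<lambda>(a, b, r, a', r'). \<sigma>SM (a, b, r, a', r') - \<sigma>S (a, r, a', r')"
  assumes "0 < \<beta>"
    and "orthonormal_basis er"
    and "density_op \<rho>SM"
    and "unitary_op USR"
    and "eigenbasis \<rho>Si ea"
    and "orthonormal_basis ea'"
    and "\<rho>Sf = (\<lambda>x y. \<Sum>a'\<in>UNIV. complex_of_real (Pt a') * ketbra (ea' a') (ea' a') x y)"
    and "eigenbasis \<rho>Mi eb"
    and "\<forall>a b. 0 < Pab a b"
  shows "(\<forall>a r a' r'. 0 < PFSR (a, r, a', r') \<longrightarrow>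
            (\<Sum>b\<in>UNIV. PF (a, b, r, a', r') / PFSR (a, r, a', r')
                         * eexp (- \<sigma>I (a, b, r, a', r'))) = 1)
         \<and> (\<Sum>\<gamma>\<in>{\<gamma>. 0 < PF \<gamma>}. PF \<gamma> * eexp (- \<sigma>I \<gamma>)) = 1"
proof -
  have onb_ea: "orthonormal_basis ea" and onb_eb: "orthonormal_basis eb"
    using \<open>eigenbasis \<rho>Si ea\<close> \<open>eigenbasis \<rho>Mi eb\<close> unfolding eigenbasis_def by simp_all
  have Pab_pos: "0 < Pab a b" and Pa_pos: "0 < Pa a" and Pb_pos: "0 < Pb b" for a b
    unfolding Pa_def Pb_def using \<open>\<forall>a b. 0 < Pab a b\<close> by (simp_all add: sum_pos)
  have "0 < (\<Sum>s\<in>UNIV. exp (- \<beta> * E s))"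
    by (simp add: sum_pos)
  then have Pr_pos: "0 < Pr r" and Pr_sum: "(\<Sum>r\<in>UNIV. Pr r) = 1" for r
    unfolding Pr_def by (simp_all add: sum_divide_distrib[symmetric])
  have \<rho>SMf_eq: "\<rho>SMf = reduced_evolution USR (diag_op er (\<lambda>r. complex_of_real (Pr r))) \<rho>SM"
    unfolding \<rho>SMf_def U_def \<rho>R_def reduced_evolution_def extend_op_def diag_op_def ..
  have "ptrace2 \<rho>SMf = diag_op ea' (\<lambda>a'. complex_of_real (Pt a'))"
    using \<open>\<rho>Sf = _\<close> unfolding \<rho>Sf_def diag_op_def .
  note populations = final_populations[OF \<open>orthonormal_basis er\<close> less_imp_le[OF Pr_pos]
      \<open>density_op \<rho>SM\<close> \<open>eigenbasis \<rho>Si ea\<close>[unfolded \<rho>Si_def] onb_eb \<open>orthonormal_basis ea'\<close>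
      this[unfolded \<rho>SMf_eq], folded \<rho>SMf_eq]
  have Ptab_nonneg: "0 \<le> Ptab a' b" and Ptab_sum: "(\<Sum>b\<in>UNIV. Ptab a' b) = Pt a'" for a' b
    unfolding Ptab_def using populations(1,2) by simp_all
  have PFSR_sum: "(\<Sum>b\<in>UNIV. PF (a, b, r, a', r')) = PFSR (a, r, a', r')" for a r a' r'
    unfolding PFSR_def by simp
  have PFSR_eq: "PFSR (a, r, a', r')
      = (cmod (cinner (tensor_vec (ea' a') (er r')) (apply_op USR (tensor_vec (ea a) (er r)))))\<^sup>2
        * Pa a * Pr r" for a r a' r'
    unfolding PFSR_def PF_def Pa_def by (simp add: sum_distrib_left sum_distrib_right)
  have Pt_eq: "Pt a' = (\<Sum>r'\<in>UNIV. \<Sum>r\<in>UNIV. \<Sum>a\<in>UNIV. PFSR (a, r, a', r'))" for a'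
    unfolding PFSR_eq Pa_def Pab_def using populations(3) by (simp add: mult_ac)
  have PFSR_nonneg: "0 \<le> PFSR (a, r, a', r')" for a r a' r'
    unfolding PFSR_eq using Pa_pos Pr_pos by (simp add: less_imp_le)
  have conditional: "\<forall>a r a' r'. 0 < PFSR (a, r, a', r') \<longrightarrow>
            (\<Sum>b\<in>UNIV. PF (a, b, r, a', r') / PFSR (a, r, a', r')
                         * eexp (- \<sigma>I (a, b, r, a', r'))) = 1"
  proof (intro allI impI)
    fix a r a' r'
    define w where
      "w = (cmod (cinner (tensor_vec (ea' a') (er r')) (apply_op USR (tensor_vec (ea a) (er r)))))\<^sup>2 * Pr r"
    assume PFSR_pos: "0 < PFSR (a, r, a', r')"
    then have "0 < Pt a'"
      unfolding Pt_eq using PFSR_nonneg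
      by (intro sum_pos2[of UNIV r'] sum_pos2[of UNIV r] sum_pos2[of UNIV a] sum_nonneg) auto
    moreover have "0 < w"
      using PFSR_pos Pa_pos[of a] zero_less_mult_pos[of "Pa a" w] unfolding PFSR_eq w_def
      by (simp add: mult_ac)
    moreover have "PF (a, b, r, a', r') = Pab a b * w" for b
      unfolding PF_def w_def by simp
    ultimately show "(\<Sum>b\<in>UNIV. PF (a, b, r, a', r') / PFSR (a, r, a', r')
                         * eexp (- \<sigma>I (a, b, r, a', r'))) = 1"
      using conditional_average_eq_one[of "Pab a" Pb "Ptab a'" w] Pab_pos Pb_pos Ptab_nonneg
      unfolding PFSR_sum[symmetric] \<sigma>I_def \<sigma>SM_def \<sigma>S_def Pa_def Ptab_sum[symmetric] by simp
  qed
  have "(\<Sum>\<gamma>\<in>{\<gamma>. 0 < PF \<gamma>}. PF \<gamma> * eexp (- \<sigma>I \<gamma>))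
      = (\<Sum>a\<in>UNIV. \<Sum>c\<in>UNIV. \<Sum>b\<in>UNIV. PF (a, b, c))"
  proof (rule sum_positive_weights_conditional)
    show "0 \<le> PF \<gamma>" for \<gamma>
      using Pab_pos Pr_pos unfolding PF_def by (cases \<gamma>) (simp add: mult_nonneg_nonneg less_imp_le)
    show "0 < PF (a, b', c)" if "0 < PF (a, b, c)" for a b b' c
      using that Pab_pos Pr_pos unfolding PF_def by (cases c) (auto simp: zero_less_mult_iff)
    show "(\<Sum>b\<in>UNIV. PF (a, b, c) / (\<Sum>b\<in>UNIV. PF (a, b, c)) * eexp (- \<sigma>I (a, b, c))) = 1"
      if "0 < (\<Sum>b\<in>UNIV. PF (a, b, c))" for a c
      using that conditional PFSR_sum by (cases c) auto
  qed
  also have "\<dots> = (\<Sum>a\<in>UNIV. \<Sum>r\<in>UNIV. Pa a * Pr r * (\<Sum>a'\<in>UNIV. \<Sum>r'\<in>UNIV.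
      (cmod (cinner (tensor_vec (ea' a') (er r')) (apply_op USR (tensor_vec (ea a) (er r)))))\<^sup>2))"
    unfolding sum_UNIV_prod PFSR_sum PFSR_eq by (simp add: sum_distrib_left mult_ac)
  also have "\<dots> = (\<Sum>a\<in>UNIV. Pa a) * (\<Sum>r\<in>UNIV. Pr r)"
    by (simp add: sum_transition_probabilities \<open>unitary_op USR\<close> \<open>orthonormal_basis ea'\<close>
        \<open>orthonormal_basis er\<close> onb_ea sum_product)
  also have "\<dots> = 1"
    using Pr_sum sum_populations_density_op[OF \<open>density_op \<rho>SM\<close> orthonormal_basis_tensor_vec[OF onb_ea onb_eb]]
    unfolding Pa_def Pab_def sum_UNIV_prod by simp
  finally show ?thesis
    using conditional by blast
qed

end
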